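(* Fix $\varepsilon>0$. Then there exists $\gamma=\gamma(\varepsilon)>0$ such that for every $n$ there exist two sets $X_1,X_2\subseteq\mathbb{R}^2$ with $|X_1|,|X_2|\le n$ such that (i) the diameter of $X_2$ is at most $\varepsilon$, and (ii) the number of pairs $(x_1,x_2)\in X_1\times X_2$ with $\|x_1-x_2\|=1$ is at least $\gamma\, u_2(n,n)$.
   Context: $u_2(m,n)$ denotes the maximum, over sets $A$ of $m$ points and $B$ of $n$ points in $\mathbb{R}^2$, of the number of pairs $(a,b)\in A\times B$ with $\|a-b\|=1$ (equivalently, the maximum number of incidences between $m$ points and $n$ unit circles in the plane). *)

theory Defs
  imports "HOL-Analysis.Analysis"
begin

definition unit_pairs :: "(real^2) set \<Rightarrow> (real^2) set \<Rightarrow> nat" where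
  "unit_pairs A B = card {(a, b). a \<in> A \<and> b \<in> B \<and> dist a b = 1}"

definition u2 :: "nat \<Rightarrow> nat \<Rightarrow> nat" where
  "u2 m n = Max {unit_pairs A B | A B. finite A \<and> finite B \<and> card A = m \<and> card B = n}"

end

theory Submission
  imports Defs
begin

(* Take sets A, B of n points realising u2(n,n) and tile the plane by squares of side
   s = eps/4, coloured by the residues mod m of their integer coordinates, where (m - 1) s >= 2.
   Some colour class of B carries at least a 1/m^2 fraction of the unit pairs. Two points of
   one colour class lying in different squares are more than 2 apart, so all unit-distance
   partners in the class of a point a of A lie in a single square. Translating each square,
   together with the points of A attached to it, onto a common square -- perturbed by a
   generic small amount so that no two points of B collide -- keeps every unit pair, does not
   increase the number of points, and leaves the image of B inside a set of diameter at most
   4 s = eps. *)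

lemma finite_unit_pair_set:
  "finite A \<Longrightarrow> finite B \<Longrightarrow> finite {(a, b). a \<in> A \<and> b \<in> B \<and> dist a b = 1}"
  by (rule finite_subset[of _ "A \<times> B"]) auto

lemma u2_attained:
  "\<exists>A B :: (real^2) set. finite A \<and> finite B \<and> card A = n \<and> card B = n \<and> unit_pairs A B = u2 n n"
proof -
  let ?S = "{unit_pairs A B | A B :: (real^2) set. finite A \<and> finite B \<and> card A = n \<and> card B = n}"
  obtain A0 :: "(real^2) set" where "finite A0" "card A0 = n"
    using infinite_arbitrarily_large[OF infinite_UNIV_char_0] by blast
  then have "?S \<noteq> {}" by blast
  moreover have "?S \<subseteq> {..n * n}"
  proof
    fix x assume "x \<in> ?S"
    then obtain A B where AB: "finite A" "finite B" "card A = n" "card B = n" "x = unit_pairs A B"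
      by blast
    have "x \<le> card (A \<times> B)"
      unfolding AB(5) unit_pairs_def by (rule card_mono) (auto simp: AB)
    then show "x \<in> {..n * n}" by (simp add: AB card_cartesian_product)
  qed
  ultimately have "u2 n n \<in> ?S"
    unfolding u2_def by (intro Max_in) (auto intro: finite_subset[of _ "{..n * n}"])
  then show ?thesis unfolding mem_Collect_eq by metis
qed

lemma floor_mod_eq_imp_abs_diff_gt:
  fixes u v :: real and m :: int
  assumes "m > 0" "\<lfloor>u\<rfloor> mod m = \<lfloor>v\<rfloor> mod m" "\<lfloor>u\<rfloor> \<noteq> \<lfloor>v\<rfloor>"
  shows "m - 1 < \<bar>u - v\<bar>"
proof -
  obtain k where k: "\<lfloor>u\<rfloor> - \<lfloor>v\<rfloor> = m * k"
    using assms(2) by (auto simp: mod_eq_dvd_iff dvd_def)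
  moreover from k assms(3) have "k \<noteq> 0" by auto
  ultimately have "m \<le> \<bar>\<lfloor>u\<rfloor> - \<lfloor>v\<rfloor>\<bar>"
    using assms(1) by (simp add: abs_mult mult_le_cancel_left1)
  then have "real_of_int m \<le> \<bar>of_int \<lfloor>u\<rfloor> - of_int \<lfloor>v\<rfloor>\<bar>"
    by (metis of_int_abs of_int_diff of_int_le_iff)
  then show ?thesis by linarith
qed

definition grid_cell :: "real \<Rightarrow> real^'n \<Rightarrow> 'n \<Rightarrow> int" where
  "grid_cell s x = (\<lambda>i. \<lfloor>x $ i / s\<rfloor>)"

definition cell_corner :: "real \<Rightarrow> ('n \<Rightarrow> int) \<Rightarrow> real^'n" where
  "cell_corner s k = (\<chi> i. s * of_int (k i))"

definition grid_colour :: "real \<Rightarrow> int \<Rightarrow> real^'n \<Rightarrow> 'n \<Rightarrow> int" where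
  "grid_colour s m x = (\<lambda>i. grid_cell s x i mod m)"

lemma grid_colour_in_PiE: "m > 0 \<Longrightarrow> grid_colour s m x \<in> UNIV \<rightarrow>\<^sub>E {0..<m}"
  by (simp add: grid_colour_def PiE_UNIV_domain)

lemma grid_colour_eq_imp_dist_gt:
  assumes "s > 0" "m > 0" "grid_colour s m x = grid_colour s m y" "grid_cell s x \<noteq> grid_cell s y"
  shows "(m - 1) * s < dist x y"
proof -
  obtain i where "\<lfloor>x $ i / s\<rfloor> \<noteq> \<lfloor>y $ i / s\<rfloor>" "\<lfloor>x $ i / s\<rfloor> mod m = \<lfloor>y $ i / s\<rfloor> mod m"
    using assms(3,4) unfolding grid_colour_def grid_cell_def by (metis ext)
  then have "m - 1 < \<bar>x $ i / s - y $ i / s\<bar>"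
    using assms(2) by (intro floor_mod_eq_imp_abs_diff_gt)
  also have "\<dots> = \<bar>(x - y) $ i\<bar> / s"
    using assms(1) by (simp add: diff_divide_distrib[symmetric] abs_divide)
  also have "\<dots> \<le> dist x y / s"
    using assms(1) component_le_norm_cart[of "x - y" i] by (simp add: dist_norm divide_right_mono)
  finally show ?thesis
    using assms(1) by (simp add: field_simps)
qed

lemma grid_offset_component_bounds:
  assumes "s > 0"
  shows "0 \<le> (x - cell_corner s (grid_cell s x)) $ i" and "(x - cell_corner s (grid_cell s x)) $ i < s"
proof -
  have "s * of_int \<lfloor>x $ i / s\<rfloor> \<le> s * (x $ i / s)"
    using assms by (intro mult_left_mono) auto
  moreover have "s * (x $ i / s) < s * (of_int \<lfloor>x $ i / s\<rfloor> + 1)"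
    using assms by (intro mult_strict_left_mono) (linarith, simp)
  ultimately show "0 \<le> (x - cell_corner s (grid_cell s x)) $ i" "(x - cell_corner s (grid_cell s x)) $ i < s"
    using assms by (simp_all add: cell_corner_def grid_cell_def field_simps)
qed

lemma diameter_translated_grid_cells:
  fixes B :: "(real^'n) set" and s \<delta> :: real
  assumes "s > 0" "\<delta> \<ge> 0"
    and "\<And>b. b \<in> B \<Longrightarrow> norm (\<tau> (grid_cell s b) + cell_corner s (grid_cell s b)) \<le> \<delta>"
  shows "diameter ((\<lambda>b. b + \<tau> (grid_cell s b)) ` B) \<le> CARD('n) * s + 2 * \<delta>"
proof (rule diameter_le)
  define offset where "offset b = b - cell_corner s (grid_cell s b)" for b :: "real^'n"
  define shift where "shift b = \<tau> (grid_cell s b) + cell_corner s (grid_cell s b)" for b :: "real^'n"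
  have offset_bounds: "0 \<le> offset b $ i" "offset b $ i < s" for b i
    unfolding offset_def using grid_offset_component_bounds assms(1) by auto
  have offset_dist: "norm (offset b - offset b') \<le> CARD('n) * s" for b b'
  proof -
    have "\<bar>(offset b - offset b') $ i\<bar> \<le> s" for i
      using offset_bounds[of b i] offset_bounds[of b' i] by simp
    then have "(\<Sum>i\<in>UNIV. \<bar>(offset b - offset b') $ i\<bar>) \<le> CARD('n) * s"
      using sum_bounded_above[of UNIV "\<lambda>i. \<bar>(offset b - offset b') $ i\<bar>" s] by simp
    moreover have "norm (offset b - offset b') \<le> (\<Sum>i\<in>UNIV. \<bar>(offset b - offset b') $ i\<bar>)"
      by (rule norm_le_l1_cart)
    ultimately show ?thesis by linarith
  qed
  fix x y assume "x \<in> (\<lambda>b. b + \<tau> (grid_cell s b)) ` B" "y \<in> (\<lambda>b. b + \<tau> (grid_cell s b)) ` B"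
  then obtain b b' where b: "b \<in> B" "b' \<in> B" and xy: "x - y = (offset b - offset b') + (shift b - shift b')"
    unfolding offset_def shift_def by auto
  have "norm (x - y) \<le> norm (offset b - offset b') + norm (shift b) + norm (shift b')"
    unfolding xy using norm_triangle_ineq[of "offset b - offset b'" "shift b - shift b'"]
      norm_triangle_ineq4[of "shift b" "shift b'"] by linarith
  also have "\<dots> \<le> CARD('n) * s + 2 * \<delta>"
    using offset_dist[of b b'] assms(3)[OF b(1)] assms(3)[OF b(2)] unfolding shift_def by linarith
  finally show "norm (x - y) \<le> CARD('n) * s + 2 * \<delta>" .
qed (use assms in auto)

lemma finite_scaleR_solutions:
  fixes u e :: "'v::real_vector"
  assumes "d \<noteq> 0" "e \<noteq> 0"
  shows "finite {x::real. u = (x * d) *\<^sub>R e}"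
proof (cases "\<exists>x. u = (x * d) *\<^sub>R e")
  case True
  then obtain x0 where x0: "u = (x0 * d) *\<^sub>R e" by blast
  have "{x. u = (x * d) *\<^sub>R e} \<subseteq> {x0}"
    using x0 assms by (auto simp: scaleR_cancel_right)
  then show ?thesis by (rule finite_subset) simp
qed simp

lemma finite_collision_parameters:
  fixes c :: "'v::real_vector \<Rightarrow> 'k" and h :: "'k \<Rightarrow> real"
  assumes "finite B" "inj_on h (c ` B)" "e \<noteq> 0"
  shows "finite {\<eta>. \<exists>b\<in>B. \<exists>b'\<in>B. c b \<noteq> c b' \<and>
    b + (g (c b) + (\<eta> * h (c b)) *\<^sub>R e) = b' + (g (c b') + (\<eta> * h (c b')) *\<^sub>R e)}"
    (is "finite ?bad")
proof -
  define U where "U = (\<Union>(b, b')\<in>{(b, b') \<in> B \<times> B. c b \<noteq> c b'}.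
    {\<eta>. b' + g (c b') - (b + g (c b)) = (\<eta> * (h (c b) - h (c b'))) *\<^sub>R e})"
  have "?bad \<subseteq> U"
  proof
    fix \<eta> assume "\<eta> \<in> ?bad"
    then obtain b b' where b: "b \<in> B" "b' \<in> B" "c b \<noteq> c b'"
      and eq: "b + (g (c b) + (\<eta> * h (c b)) *\<^sub>R e) = b' + (g (c b') + (\<eta> * h (c b')) *\<^sub>R e)"
      by blast
    from eq have "b' + g (c b') - (b + g (c b)) = (\<eta> * (h (c b) - h (c b'))) *\<^sub>R e"
      by (simp add: algebra_simps scaleR_diff_left)
    with b show "\<eta> \<in> U" unfolding U_def by blast
  qed
  moreover have "h (c b) - h (c b') \<noteq> 0" if "b \<in> B" "b' \<in> B" "c b \<noteq> c b'" for b b'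
    using that inj_onD[OF assms(2)] by auto
  then have "finite U"
    unfolding U_def using assms(1,3)
    by (intro finite_UN_I) (auto intro!: finite_scaleR_solutions intro: finite_subset[of _ "B \<times> B"])
  ultimately show ?thesis by (rule finite_subset)
qed

lemma perturb_translations_inj_on:
  fixes c :: "'v::real_normed_vector \<Rightarrow> 'k" and g :: "'k \<Rightarrow> 'v"
  assumes "finite B" "\<delta> > 0"
  shows "\<exists>\<tau>. (\<forall>b\<in>B. norm (\<tau> (c b) - g (c b)) \<le> \<delta>) \<and> inj_on (\<lambda>b. b + \<tau> (c b)) B"
proof (cases "\<exists>e::'v. e \<noteq> 0")
  case False
  then have "inj_on (\<lambda>b. b + g (c b)) B" by (metis inj_onI)
  then show ?thesis using assms(2) by (intro exI[of _ g]) simp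
next
  case True
  then obtain e :: 'v where e: "e \<noteq> 0" by blast
  define N where "N = card (c ` B)"
  obtain h where h: "bij_betw h (c ` B) {0..<N}"
    using ex_bij_betw_finite_nat assms(1) unfolding N_def by blast
  define \<tau> where "\<tau> \<eta> k = g k + (\<eta> * real (h k)) *\<^sub>R e" for \<eta> k
  define \<eta>0 where "\<eta>0 = \<delta> / ((N + 1) * norm e)"
  define collisions where
    "collisions = {\<eta>. \<exists>b\<in>B. \<exists>b'\<in>B. c b \<noteq> c b' \<and> b + \<tau> \<eta> (c b) = b' + \<tau> \<eta> (c b')}"
  have "finite collisions"
    unfolding collisions_def \<tau>_def using assms(1) e bij_betw_imp_inj_on[OF h]
    by (intro finite_collision_parameters) (auto simp: inj_on_def)
  moreover have "\<eta>0 > 0" using assms(2) e by (simp add: \<eta>0_def)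
  ultimately have "infinite ({0<..<\<eta>0} - collisions)" by (simp add: Diff_infinite_finite)
  then obtain \<eta> where "\<eta> \<in> {0<..<\<eta>0} - collisions" by (metis infinite_imp_nonempty ex_in_conv)
  then have \<eta>: "0 < \<eta>" "\<eta> < \<eta>0" "\<eta> \<notin> collisions" by auto
  have "norm (\<tau> \<eta> (c b) - g (c b)) \<le> \<delta>" if "b \<in> B" for b
  proof -
    have "h (c b) < N" using that h by (auto dest: bij_betw_apply)
    then have "\<eta> * real (h (c b)) * norm e \<le> \<eta>0 * N * norm e"
      using \<eta> by (intro mult_right_mono mult_mono) auto
    also have "\<dots> = \<delta> * (N / (N + 1))"
      using e unfolding \<eta>0_def by (simp add: divide_simps)
    also have "\<dots> \<le> \<delta>"
      using assms(2) by (intro mult_left_le) auto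
    finally show ?thesis using \<eta> by (simp add: \<tau>_def)
  qed
  moreover have "inj_on (\<lambda>b. b + \<tau> \<eta> (c b)) B"
  proof (rule inj_onI)
    fix b b' assume "b \<in> B" "b' \<in> B" "b + \<tau> \<eta> (c b) = b' + \<tau> \<eta> (c b')"
    with \<eta>(3) show "b = b'" unfolding collisions_def by (cases "c b = c b'") auto
  qed
  ultimately show ?thesis by blast
qed

lemma card_translate_by_partner_label_le:
  fixes P :: "('v::plus \<times> 'w) set" and \<kappa> :: "'w \<Rightarrow> 'k" and \<tau> :: "'k \<Rightarrow> 'v"
  assumes "finite P" "\<And>a b b'. (a, b) \<in> P \<Longrightarrow> (a, b') \<in> P \<Longrightarrow> \<kappa> b = \<kappa> b'"
  shows "card ((\<lambda>(a, b). a + \<tau> (\<kappa> b)) ` P) \<le> card (fst ` P)"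
proof -
  define partner where "partner a = (SOME b. (a, b) \<in> P)" for a
  have "(\<lambda>(a, b). a + \<tau> (\<kappa> b)) ` P \<subseteq> (\<lambda>a. a + \<tau> (\<kappa> (partner a))) ` fst ` P"
  proof clarify
    fix a b assume ab: "(a, b) \<in> P"
    then have "(a, partner a) \<in> P" unfolding partner_def by (rule someI)
    then have "a + \<tau> (\<kappa> b) = a + \<tau> (\<kappa> (partner a))" using assms(2) ab by metis
    then show "a + \<tau> (\<kappa> b) \<in> (\<lambda>a. a + \<tau> (\<kappa> (partner a))) ` fst ` P" using ab by force
  qed
  then show ?thesis
    by (meson assms(1) card_image_le card_mono finite_imageI order_trans)
qed

lemma card_le_unit_pairs_translate:
  fixes P :: "((real^2) \<times> (real^2)) set"
  assumes "finite P" "\<And>a b. (a, b) \<in> P \<Longrightarrow> dist a b = 1"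
    and "inj_on (\<lambda>b. b + \<tau> (\<kappa> b)) (snd ` P)"
  shows "card P \<le> unit_pairs ((\<lambda>(a, b). a + \<tau> (\<kappa> b)) ` P) ((\<lambda>b. b + \<tau> (\<kappa> b)) ` snd ` P)"
    (is "_ \<le> unit_pairs ?X1 ?X2")
proof -
  define \<phi> where "\<phi> = (\<lambda>(a, b). (a + \<tau> (\<kappa> b), b + \<tau> (\<kappa> b)))"
  have inj: "inj_on \<phi> P"
  proof (rule inj_onI, clarify)
    fix a b a' b' assume ab: "(a, b) \<in> P" "(a', b') \<in> P" and \<phi>: "\<phi> (a, b) = \<phi> (a', b')"
    have "b \<in> snd ` P" "b' \<in> snd ` P"
      using image_eqI[of b snd "(a, b)"] image_eqI[of b' snd "(a', b')"] ab by simp_all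
    moreover have "b + \<tau> (\<kappa> b) = b' + \<tau> (\<kappa> b')"
      using \<phi> by (simp add: \<phi>_def)
    ultimately have "b = b'" using inj_onD[OF assms(3), of b b'] by simp
    with \<phi> show "a = a' \<and> b = b'" by (simp add: \<phi>_def)
  qed
  have sub: "\<phi> ` P \<subseteq> {(x1, x2). x1 \<in> ?X1 \<and> x2 \<in> ?X2 \<and> dist x1 x2 = 1}"
  proof
    fix z assume "z \<in> \<phi> ` P"
    then obtain a b where ab: "(a, b) \<in> P" and z: "z = \<phi> (a, b)" by auto
    have "a + \<tau> (\<kappa> b) \<in> ?X1" using ab by (rule rev_image_eqI) simp
    moreover have "b + \<tau> (\<kappa> b) \<in> ?X2" using image_eqI[of b snd "(a, b)"] ab by simp
    moreover have "dist (a + \<tau> (\<kappa> b)) (b + \<tau> (\<kappa> b)) = 1" using assms(2)[OF ab] by (simp add: dist_norm)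
    ultimately show "z \<in> {(x1, x2). x1 \<in> ?X1 \<and> x2 \<in> ?X2 \<and> dist x1 x2 = 1}" by (simp add: z \<phi>_def)
  qed
  have "finite ?X1" "finite ?X2" using assms(1) by simp_all
  then have "card (\<phi> ` P) \<le> unit_pairs ?X1 ?X2"
    unfolding unit_pairs_def by (intro card_mono[OF _ sub] finite_unit_pair_set)
  then show ?thesis using card_image[OF inj] by simp
qed

lemma unit_partners_same_grid_cell:
  fixes a b b' :: "real^'n" and s :: real and m :: int
  assumes "s > 0" "m > 0" "2 \<le> (m - 1) * s" "dist a b = 1" "dist a b' = 1"
    and "grid_colour s m b = grid_colour s m b'"
  shows "grid_cell s b = grid_cell s b'"
proof (rule ccontr)
  assume "grid_cell s b \<noteq> grid_cell s b'"
  then have "(m - 1) * s < dist b b'"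
    using grid_colour_eq_imp_dist_gt[OF assms(1,2,6)] by simp
  moreover have "dist b b' \<le> 2"
    using dist_triangle[of b b' a] assms(4,5) by (simp add: dist_commute)
  ultimately show False using assms(3) by linarith
qed

lemma merge_grid_cells_of_unit_pairs:
  fixes Q :: "((real^2) \<times> (real^2)) set" and s :: real
  assumes "finite Q" "s > 0" "\<And>a b. (a, b) \<in> Q \<Longrightarrow> dist a b = 1"
    and "\<And>a b b'. (a, b) \<in> Q \<Longrightarrow> (a, b') \<in> Q \<Longrightarrow> grid_cell s b = grid_cell s b'"
  shows "\<exists>X1 X2. finite X1 \<and> finite X2 \<and> card X1 \<le> card (fst ` Q) \<and> card X2 \<le> card (snd ` Q) \<and>
    diameter X2 \<le> 4 * s \<and> card Q \<le> unit_pairs X1 X2"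
proof -
  obtain \<tau> where \<tau>: "\<forall>b\<in>snd ` Q. norm (\<tau> (grid_cell s b) - - cell_corner s (grid_cell s b)) \<le> s"
    and inj: "inj_on (\<lambda>b. b + \<tau> (grid_cell s b)) (snd ` Q)"
    using perturb_translations_inj_on[OF finite_imageI[OF assms(1)] assms(2),
        where c = "grid_cell s" and g = "\<lambda>k. - cell_corner s k"]
    by blast
  define X1 where "X1 = (\<lambda>(a, b). a + \<tau> (grid_cell s b)) ` Q"
  define X2 where "X2 = (\<lambda>b. b + \<tau> (grid_cell s b)) ` snd ` Q"
  have "finite X1" "finite X2" using assms(1) by (simp_all add: X1_def X2_def)
  moreover have "card X1 \<le> card (fst ` Q)"
    unfolding X1_def using assms(1,4) by (rule card_translate_by_partner_label_le)
  moreover have "card X2 \<le> card (snd ` Q)"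
    unfolding X2_def using assms(1) by (simp add: card_image_le)
  moreover have "diameter X2 \<le> CARD(2) * s + 2 * s"
    unfolding X2_def using \<tau> assms(2) by (intro diameter_translated_grid_cells) auto
  moreover have "card Q \<le> unit_pairs X1 X2"
    unfolding X1_def X2_def using assms(1,3) inj by (rule card_le_unit_pairs_translate)
  ultimately show ?thesis by auto
qed

lemma exists_concentrated_configuration:
  fixes A B :: "(real^2) set" and s :: real and m :: nat
  assumes "finite A" "finite B" "s > 0" "m > 0" "2 \<le> (real m - 1) * s"
  shows "\<exists>X1 X2. finite X1 \<and> finite X2 \<and> card X1 \<le> card A \<and> card X2 \<le> card B \<and>
    diameter X2 \<le> 4 * s \<and> unit_pairs A B \<le> m\<^sup>2 * unit_pairs X1 X2"
proof -
  define P where "P = {(a, b). a \<in> A \<and> b \<in> B \<and> dist a b = 1}"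
  define C where "C = (UNIV :: 2 set) \<rightarrow>\<^sub>E {0..<int m}"
  have "finite P" unfolding P_def using assms(1,2) by (rule finite_unit_pair_set)
  have "card C = m\<^sup>2" by (simp add: C_def card_PiE)
  have "finite C" "C \<noteq> {}" using assms(4) by (simp_all add: C_def finite_PiE PiE_eq_empty_iff)
  moreover have "grid_colour s m \<circ> snd \<in> P \<rightarrow> C"
    using assms(4) by (intro funcsetI) (simp add: C_def grid_colour_in_PiE)
  ultimately obtain c where c: "card P \<le> card ((grid_colour s m \<circ> snd) -` {c} \<inter> P) * card C"
    using pigeonhole_card \<open>finite P\<close> by metis
  define Q where "Q = (grid_colour s m \<circ> snd) -` {c} \<inter> P"
  have "finite Q" using \<open>finite P\<close> by (simp add: Q_def)
  have "fst ` Q \<subseteq> A" "snd ` Q \<subseteq> B" by (auto simp: Q_def P_def)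
  have same_cell: "grid_cell s b = grid_cell s b'" if "(a, b) \<in> Q" "(a, b') \<in> Q" for a b b'
  proof -
    have "dist a b = 1" "dist a b' = 1" "grid_colour s m b = grid_colour s m b'"
      using that by (auto simp: Q_def P_def)
    then show ?thesis
      using assms(3,4,5) by (intro unit_partners_same_grid_cell[of s "int m"]) auto
  qed
  have unit_dist: "dist a b = 1" if "(a, b) \<in> Q" for a b using that by (simp add: Q_def P_def)
  have "\<exists>X1 X2. finite X1 \<and> finite X2 \<and> card X1 \<le> card (fst ` Q) \<and> card X2 \<le> card (snd ` Q) \<and>
    diameter X2 \<le> 4 * s \<and> card Q \<le> unit_pairs X1 X2"
    using \<open>finite Q\<close> assms(3) unit_dist same_cell by (rule merge_grid_cells_of_unit_pairs)
  then obtain X1 X2 where X: "finite X1" "finite X2" "diameter X2 \<le> 4 * s"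
    and X1_le: "card X1 \<le> card (fst ` Q)" and X2_le: "card X2 \<le> card (snd ` Q)"
    and Q_le: "card Q \<le> unit_pairs X1 X2"
    by blast
  have "card X1 \<le> card A"
    using X1_le card_mono[OF assms(1) \<open>fst ` Q \<subseteq> A\<close>] by linarith
  moreover have "card X2 \<le> card B"
    using X2_le card_mono[OF assms(2) \<open>snd ` Q \<subseteq> B\<close>] by linarith
  moreover have "unit_pairs A B \<le> m\<^sup>2 * unit_pairs X1 X2"
  proof -
    have "unit_pairs A B = card P" by (simp add: unit_pairs_def P_def)
    also have "\<dots> \<le> card Q * m\<^sup>2" using c \<open>card C = m\<^sup>2\<close> by (simp add: Q_def)
    also have "\<dots> \<le> unit_pairs X1 X2 * m\<^sup>2" using Q_le by simp
    finally show ?thesis by (simp add: mult.commute)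
  qed
  ultimately show ?thesis using X by blast
qed

theorem proposition3p2:
  fixes \<epsilon> :: real
  assumes "\<epsilon> > 0"
  shows "\<exists>\<gamma>::real. \<gamma> > 0 \<and>
    (\<forall>n::nat. \<exists>X1 X2 :: (real^2) set.
        finite X1 \<and> finite X2 \<and> card X1 \<le> n \<and> card X2 \<le> n \<and>
        diameter X2 \<le> \<epsilon> \<and>
        real (unit_pairs X1 X2) \<ge> \<gamma> * real (u2 n n))"
proof -
  define m :: nat where "m = nat \<lceil>8 / \<epsilon>\<rceil> + 1"
  have "m > 0" by (simp add: m_def)
  have "8 / \<epsilon> \<le> real m - 1" unfolding m_def by linarith
  then have spacing: "2 \<le> (real m - 1) * (\<epsilon> / 4)" using assms by (simp add: field_simps)
  have "\<exists>X1 X2 :: (real^2) set. finite X1 \<and> finite X2 \<and> card X1 \<le> n \<and> card X2 \<le> n \<and>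
      diameter X2 \<le> \<epsilon> \<and> real (unit_pairs X1 X2) \<ge> 1 / m\<^sup>2 * real (u2 n n)" for n
  proof -
    obtain A B where AB: "finite A" "finite B" "card A = n" "card B = n" "unit_pairs A B = u2 n n"
      using u2_attained by blast
    moreover obtain X1 X2 where "finite X1" "finite X2" "card X1 \<le> card A" "card X2 \<le> card B"
      "diameter X2 \<le> 4 * (\<epsilon> / 4)" and up: "unit_pairs A B \<le> m\<^sup>2 * unit_pairs X1 X2"
      using exists_concentrated_configuration[OF AB(1,2) _ \<open>m > 0\<close> spacing] assms by auto
    moreover have "1 / m\<^sup>2 * real (unit_pairs A B) \<le> real (unit_pairs X1 X2)"
      using up \<open>m > 0\<close> by (simp add: field_simps flip: of_nat_mult of_nat_power)
    ultimately show ?thesis by auto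
  qed
  then show ?thesis using \<open>m > 0\<close> by (intro exI[of _ "1 / m\<^sup>2"]) auto
qed

end
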